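(* Let $a,b$ be real constants with $|a|,|b|\le 0.01$ and define, for real $x>1$, \[f(x)=\frac{(x+a)(x+1)+2b-2\sqrt{x^3+ax+b}\,\sqrt{1+a+b}}{(1-x)^2}.\] Then $f(x)\le 2$ for all $x>1$. *)

theory Defs
  imports Complex_Main
begin

end

theory Submission
  imports Defs
begin

text \<open>Since \<open>(1 - x)\<^sup>2 > 0\<close>, the claim says
  \<open>N \<le> 2 \<surd>(P Q)\<close> for \<open>N = (x + a)(x + 1) + 2b - 2(1 - x)\<^sup>2\<close>,
  \<open>P = x\<^sup>3 + a x + b\<close>, \<open>Q = 1 + a + b\<close>. This is trivial where \<open>N \<le> 0\<close>.
  The quadratic \<open>N\<close> is positive only for \<open>x < 5 + a\<close>, and on that range
  \<open>4 P Q - N\<^sup>2 = (x - 1)\<^sup>2 R\<close> with a cofactor \<open>R\<close> that stays positive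
  because \<open>a\<close> and \<open>b\<close> are small.\<close>

lemma le_sqrt_if_square_le_when_pos:
  fixes y z :: real
  assumes "0 \<le> z" and "0 < y \<Longrightarrow> y\<^sup>2 \<le> z"
  shows "y \<le> sqrt z"
proof (cases "0 < y")
  case True
  then show ?thesis
    using assms(2) by (simp add: real_le_rsqrt)
next
  case False
  then show ?thesis
    using real_sqrt_ge_zero[OF assms(1)] by linarith
qed

lemma discriminant_factorization:
  fixes a b x :: real
  shows "4 * (x ^ 3 + a * x + b) * (1 + a + b) - ((x + a) * (x + 1) + 2 * b - 2 * (1 - x)\<^sup>2)\<^sup>2
         = (x - 1)\<^sup>2 * ((x - 1) * (11 - x) + 11 + (6 * a + 4 * b) * x + 4 * (1 + a + b) * b
                         - (a + 2 * b - 2)\<^sup>2)"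
  by (simp add: algebra_simps power2_eq_square power3_eq_cube)

lemma less_6_if_quadratic_pos:
  fixes a b x :: real
  assumes "\<bar>a\<bar> \<le> 1/100" and "\<bar>b\<bar> \<le> 1/100" and "0 < x"
    and "0 < (x + a) * (x + 1) + 2 * b - 2 * (1 - x)\<^sup>2"
  shows "x < 6"
proof -
  have "x * x < (5 + a) * x"
    using assms by (simp add: algebra_simps power2_eq_square)
  then have "x < 5 + a"
    using \<open>0 < x\<close> by (simp add: mult_less_cancel_right_pos)
  then show ?thesis
    using assms(1) by linarith
qed

lemma cofactor_pos:
  fixes a b x :: real
  assumes "\<bar>a\<bar> \<le> 1/100" and "\<bar>b\<bar> \<le> 1/100" and "1 < x" and "x < 6"
  shows "0 < (x - 1) * (11 - x) + 11 + (6 * a + 4 * b) * x + 4 * (1 + a + b) * b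
             - (a + 2 * b - 2)\<^sup>2"
proof -
  have "0 \<le> (x - 1) * (11 - x)"
    using assms by simp
  moreover have "-(6/10) \<le> (6 * a + 4 * b) * x"
  proof -
    have "\<bar>6 * a + 4 * b\<bar> \<le> 1/10"
      using assms(1,2) unfolding abs_le_iff by linarith
    then have "\<bar>(6 * a + 4 * b) * x\<bar> \<le> 1/10 * 6"
      unfolding abs_mult using assms(3,4) by (intro mult_mono) auto
    then show ?thesis by linarith
  qed
  moreover have "-(1/10) \<le> 4 * (1 + a + b) * b"
  proof -
    have "\<bar>(1 + a + b) * b\<bar> \<le> 2 * (1/100)"
      unfolding abs_mult using assms by (intro mult_mono) auto
    then show ?thesis by linarith
  qed
  moreover have "(a + 2 * b - 2)\<^sup>2 \<le> 3\<^sup>2"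
  proof -
    have "\<bar>a + 2 * b - 2\<bar> \<le> \<bar>3\<bar>"
      using assms(1,2) unfolding abs_le_iff by linarith
    then show ?thesis
      by (simp only: abs_le_square_iff)
  qed
  ultimately show ?thesis by simp
qed

lemma cubic_pos:
  fixes a b x :: real
  assumes "\<bar>a\<bar> \<le> 1/100" and "\<bar>b\<bar> \<le> 1/100" and "1 < x"
  shows "0 < x ^ 3 + a * x + b"
proof -
  have "x \<le> x ^ 3"
    using power_increasing[of 1 3 x] assms(3) by simp
  moreover have "-(x/100) \<le> a * x"
    using mult_right_mono[of "-(1/100)" a x] assms by auto
  ultimately show ?thesis
    using assms unfolding abs_le_iff by linarith
qed

theorem lemmaA2:
  fixes a b x :: real
  assumes "\<bar>a\<bar> \<le> 0.01" and "\<bar>b\<bar> \<le> 0.01" and "x > 1"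
  shows "((x + a) * (x + 1) + 2 * b - 2 * sqrt (x ^ 3 + a * x + b) * sqrt (1 + a + b))
           / (1 - x) ^ 2 \<le> 2"
proof -
  define N where "N = (x + a) * (x + 1) + 2 * b - 2 * (1 - x)\<^sup>2"
  define P where "P = x ^ 3 + a * x + b"
  define Q where "Q = 1 + a + b"
  have small: "\<bar>a\<bar> \<le> 1/100" "\<bar>b\<bar> \<le> 1/100"
    using assms(1,2) by simp_all
  have "0 \<le> 4 * P * Q"
    using cubic_pos[OF small assms(3)] small unfolding P_def Q_def abs_le_iff
    by (intro mult_nonneg_nonneg) auto
  moreover have "N\<^sup>2 \<le> 4 * P * Q" if "0 < N"
  proof -
    have "x < 6"
      using less_6_if_quadratic_pos[OF small] that assms(3) unfolding N_def by simp
    then have "0 \<le> 4 * P * Q - N\<^sup>2"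
      using discriminant_factorization[of x a b] cofactor_pos[OF small assms(3)]
      unfolding N_def P_def Q_def by simp
    then show ?thesis by simp
  qed
  ultimately have "N \<le> sqrt (4 * P * Q)"
    by (rule le_sqrt_if_square_le_when_pos)
  also have "\<dots> = 2 * sqrt P * sqrt Q"
    by (simp add: real_sqrt_mult)
  finally show ?thesis
    using assms(3) unfolding N_def P_def Q_def by (simp add: pos_divide_le_eq)
qed

end
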